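(* Let $S$ be a square-free semigroup, $D$ a division ring, $(\alpha,\xi)\in Z^2(S,D^* )$ a normal 2-cocycle and $R=D^{\alpha}_{\xi}S$. Let $\Phi:\mathrm{Out}\,R\to\mathrm{Aut}(S)$ be the homomorphism described below. Then $\mathrm{Im}\,\Phi=\mathrm{Stab}_{[\alpha,\xi]}(\mathrm{Aut}\,S)=\{\phi\in\mathrm{Aut}(S):[\alpha,\xi]=[\alpha^{\phi},\xi^{\phi}]\}$.
   Context: $D$ is a division ring, $D^*$ its group of units, $\mathrm{Aut}(D)$ its ring automorphism group, $\rho_d(x)=dxd^{-1}$. A square-free semigroup is a semigroup $S$ (product $s\cdot t$) with zero $\theta$ and a finite set $E\subseteq S$ of nonzero pairwise orthogonal idempotents with $S=\bigcup_{e,f\in E}e\cdot S\cdot f$ and $|e\cdot S\cdot f\setminus\{\theta\}|\le 1$; $S^*=S\setminus\{\theta\}$, each $s\in S^*$ equals $e\cdot s\cdot f$ for unique $e,f\in E$; $\mathrm{Aut}(S)$ is the semigroup automorphism group. $S^{<0>}=E$, $S^{<n>}=\{(s_1,\dots,s_n)\in S^n:s_1\cdots s_n\ne\theta\}$, $F^n(S,G)$ the group of functions $S^{<n>}\to G$; $\alpha_s=\alpha(s)$, $\mu_e=\mu(e)$. A 2-cocycle is $(\alpha,\xi)\in F^1(S,\mathrm{Aut}(D))\times F^2(S,D^* )$ with $\alpha_s(\xi(t,u))\xi(s,t\cdot u)=\xi(s,t)\xi(s\cdot t,u)$ on $S^{<3>}$ and $\alpha_s\circ\alpha_t=\rho_{\xi(s,t)}\circ\alpha_{s\cdot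 t}$ on $S^{<2>}$; $Z^2(S,D^* )$ is their set; normal means $\alpha_e=1_D$, $\xi(e,e)=1$ for $e\in E$. $F^0(S,\mathrm{Aut}(D))\ltimes F^1(S,D^* )$ acts on $Z^2(S,D^* )$ by $(\mu,\eta)*(\alpha,\xi)=(\beta,\zeta)$ where for $s=e\cdot s\cdot f$, $t=f\cdot t\cdot g$, $s\cdot t\ne\theta$: $\mu_e\circ\beta_s\circ\mu_f^{-1}=\rho_{\eta(s)}\circ\alpha_s$ and $\mu_e(\zeta(s,t))=\eta(s)\alpha_s(\eta(t))\xi(s,t)\eta(s\cdot t)^{-1}$; $[\alpha,\xi]$ denotes the orbit (thin 2-cohomology class). For $\phi\in\mathrm{Aut}(S)$, $\alpha^{\phi}_s=\alpha_{\phi(s)}$, $\xi^{\phi}(s,t)=\xi(\phi(s),\phi(t))$. $D^{\alpha}_{\xi}S$ is the left $D$-vector space with basis $S^*$, multiplication extended by distributivity from $(d_1s)(d_2t)=d_1\alpha_s(d_2)\xi(s,t)(s\cdot t)$ if $s\cdot t\ne\theta$, $0$ otherwise. $\mathrm{Out}\,R=\mathrm{Aut}\,R/\mathrm{Inn}\,R$. The map $\Phi$: let $\mathrm{Aut}_0R=\{\gamma\in\mathrm{Aut}\,R:\gamma(E)=E\}$. Every coset $(\mathrm{Inn}\,R)\gamma$ contains some $\gamma_0\in\mathrm{Aut}_0R$, and every $\gamma_0\in\mathrm{Aut}_0R$ has the form $\gamma_0(ds)=\mu_e(d)\eta(s)\phi(s)$ ($d\in D$, $s=e\cdot s\in S^*$)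 for some $\mu\in F^0(S,\mathrm{Aut}(D))$, $\eta\in F^1(S,D^* )$, $\phi\in\mathrm{Aut}(S)$, with $\phi$ depending only on the coset; $\Phi((\mathrm{Inn}\,R)\gamma_0)=\phi$ is a group homomorphism. *)

theory Defs
  imports Main
begin

definition eSf :: "('s \<Rightarrow> 's \<Rightarrow> 's) \<Rightarrow> 's set \<Rightarrow> 's \<Rightarrow> 's \<Rightarrow> 's set" where
  "eSf m S e f = {m (m e s) f | s. s \<in> S}"

definition sq_free_sg :: "('s \<Rightarrow> 's \<Rightarrow> 's) \<Rightarrow> 's \<Rightarrow> 's set \<Rightarrow> 's set \<Rightarrow> bool" where
  "sq_free_sg m z E S \<longleftrightarrow>
     (\<forall>a\<in>S. \<forall>b\<in>S. m a b \<in> S) \<and>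
     (\<forall>a\<in>S. \<forall>b\<in>S. \<forall>c\<in>S. m (m a b) c = m a (m b c)) \<and>
     z \<in> S \<and> (\<forall>a\<in>S. m z a = z \<and> m a z = z) \<and>
     finite E \<and> E \<subseteq> S \<and>
     (\<forall>e\<in>E. e \<noteq> z \<and> m e e = e) \<and>
     (\<forall>e\<in>E. \<forall>f\<in>E. e \<noteq> f \<longrightarrow> m e f = z) \<and>
     S = (\<Union>e\<in>E. \<Union>f\<in>E. eSf m S e f) \<and>
     (\<forall>e\<in>E. \<forall>f\<in>E. \<forall>x y. x \<in> eSf m S e f - {z} \<longrightarrow> y \<in> eSf m S e f - {z} \<longrightarrow> x = y)"

definition sg_aut :: "('s \<Rightarrow> 's \<Rightarrow> 's) \<Rightarrow> 's set \<Rightarrow> ('s \<Rightarrow> 's) \<Rightarrow> bool" where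
  "sg_aut m S \<phi> \<longleftrightarrow> bij_betw \<phi> S S \<and> (\<forall>s\<in>S. \<forall>t\<in>S. \<phi> (m s t) = m (\<phi> s) (\<phi> t)) \<and>
     (\<forall>x. x \<notin> S \<longrightarrow> \<phi> x = x)"

definition dr_aut :: "('d::division_ring \<Rightarrow> 'd) \<Rightarrow> bool" where
  "dr_aut \<sigma> \<longleftrightarrow> bij \<sigma> \<and> (\<forall>x y. \<sigma> (x + y) = \<sigma> x + \<sigma> y) \<and> (\<forall>x y. \<sigma> (x * y) = \<sigma> x * \<sigma> y)"

definition rho :: "'d::division_ring \<Rightarrow> 'd \<Rightarrow> 'd" where
  "rho d x = d * x * inverse d"

definition cocycle :: "('s \<Rightarrow> 's \<Rightarrow> 's) \<Rightarrow> 's \<Rightarrow> 's set \<Rightarrow>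
    ('s \<Rightarrow> 'd::division_ring \<Rightarrow> 'd) \<Rightarrow> ('s \<Rightarrow> 's \<Rightarrow> 'd) \<Rightarrow> bool" where
  "cocycle m z S \<alpha> \<xi> \<longleftrightarrow>
     (\<forall>s\<in>S - {z}. dr_aut (\<alpha> s)) \<and>
     (\<forall>s\<in>S. \<forall>t\<in>S. m s t \<noteq> z \<longrightarrow> \<xi> s t \<noteq> 0) \<and>
     (\<forall>s\<in>S. \<forall>t\<in>S. \<forall>u\<in>S. m (m s t) u \<noteq> z \<longrightarrow>
        \<alpha> s (\<xi> t u) * \<xi> s (m t u) = \<xi> s t * \<xi> (m s t) u) \<and>
     (\<forall>s\<in>S. \<forall>t\<in>S. m s t \<noteq> z \<longrightarrow> \<alpha> s \<circ> \<alpha> t = rho (\<xi> s t) \<circ> \<alpha> (m s t))"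

definition normal_cocycle :: "'s set \<Rightarrow> ('s \<Rightarrow> 'd::division_ring \<Rightarrow> 'd) \<Rightarrow> ('s \<Rightarrow> 's \<Rightarrow> 'd) \<Rightarrow> bool" where
  "normal_cocycle E \<alpha> \<xi> \<longleftrightarrow> (\<forall>e\<in>E. \<alpha> e = id \<and> \<xi> e e = 1)"

text \<open>act_eq m z E S \<mu> \<eta> (\<alpha>,\<xi>) (\<beta>,\<zeta>): (\<mu>,\<eta>) * (\<alpha>,\<xi>) = (\<beta>,\<zeta>), where
(\<mu>,\<eta>) ranges over F^0(S,Aut D) x F^1(S,D^*).  The condition
mu_e o beta_s o mu_f^-1 = rho_eta(s) o alpha_s is written equivalently as
mu_e o beta_s = rho_eta(s) o alpha_s o mu_f.\<close>
definition act_eq :: "('s \<Rightarrow> 's \<Rightarrow> 's) \<Rightarrow> 's \<Rightarrow> 's set \<Rightarrow> 's set \<Rightarrow>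
    ('s \<Rightarrow> 'd::division_ring \<Rightarrow> 'd) \<Rightarrow> ('s \<Rightarrow> 'd) \<Rightarrow>
    ('s \<Rightarrow> 'd \<Rightarrow> 'd) \<Rightarrow> ('s \<Rightarrow> 's \<Rightarrow> 'd) \<Rightarrow>
    ('s \<Rightarrow> 'd \<Rightarrow> 'd) \<Rightarrow> ('s \<Rightarrow> 's \<Rightarrow> 'd) \<Rightarrow> bool" where
  "act_eq m z E S \<mu> \<eta> \<alpha> \<xi> \<beta> \<zeta> \<longleftrightarrow>
     (\<forall>s\<in>S - {z}. \<forall>e\<in>E. \<forall>f\<in>E. m (m e s) f = s \<longrightarrow>
        \<mu> e \<circ> \<beta> s = rho (\<eta> s) \<circ> \<alpha> s \<circ> \<mu> f) \<and>
     (\<forall>s\<in>S - {z}. \<forall>t\<in>S - {z}. \<forall>e\<in>E. m e s = s \<longrightarrow> m s t \<noteq> z \<longrightarrow>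
        \<mu> e (\<zeta> s t) = \<eta> s * \<alpha> s (\<eta> t) * \<xi> s t * inverse (\<eta> (m s t)))"

definition group_elt :: "'s \<Rightarrow> 's set \<Rightarrow> 's set \<Rightarrow> ('s \<Rightarrow> 'd::division_ring \<Rightarrow> 'd) \<Rightarrow> ('s \<Rightarrow> 'd) \<Rightarrow> bool" where
  "group_elt z E S \<mu> \<eta> \<longleftrightarrow> (\<forall>e\<in>E. dr_aut (\<mu> e)) \<and> (\<forall>s\<in>S - {z}. \<eta> s \<noteq> 0)"

definition cstab :: "('s \<Rightarrow> 's \<Rightarrow> 's) \<Rightarrow> 's \<Rightarrow> 's set \<Rightarrow> 's set \<Rightarrow>
    ('s \<Rightarrow> 'd::division_ring \<Rightarrow> 'd) \<Rightarrow> ('s \<Rightarrow> 's \<Rightarrow> 'd) \<Rightarrow> ('s \<Rightarrow> 's) set" where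
  "cstab m z E S \<alpha> \<xi> = {\<phi>. sg_aut m S \<phi> \<and>
     (\<exists>\<mu> \<eta>. group_elt z E S \<mu> \<eta> \<and>
        act_eq m z E S \<mu> \<eta> \<alpha> \<xi> (\<lambda>s. \<alpha> (\<phi> s)) (\<lambda>s t. \<xi> (\<phi> s) (\<phi> t)))}"

text \<open>Elements of R: coefficient functions S* -> D (zero outside S*); S is finite.\<close>
definition Rcarrier :: "'s \<Rightarrow> 's set \<Rightarrow> ('s \<Rightarrow> 'd::zero) set" where
  "Rcarrier z S = {x. \<forall>u. (u \<notin> S \<or> u = z) \<longrightarrow> x u = 0}"

definition Radd :: "('s \<Rightarrow> 'd::plus) \<Rightarrow> ('s \<Rightarrow> 'd) \<Rightarrow> ('s \<Rightarrow> 'd)" where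
  "Radd x y = (\<lambda>u. x u + y u)"

definition Rmult :: "('s \<Rightarrow> 's \<Rightarrow> 's) \<Rightarrow> 's \<Rightarrow> 's set \<Rightarrow>
    ('s \<Rightarrow> 'd::division_ring \<Rightarrow> 'd) \<Rightarrow> ('s \<Rightarrow> 's \<Rightarrow> 'd) \<Rightarrow>
    ('s \<Rightarrow> 'd) \<Rightarrow> ('s \<Rightarrow> 'd) \<Rightarrow> ('s \<Rightarrow> 'd)" where
  "Rmult m z S \<alpha> \<xi> x y = (\<lambda>u. \<Sum>(s,t)\<in>{(s,t). s \<in> S - {z} \<and> t \<in> S - {z} \<and> m s t = u \<and> u \<noteq> z}.
      x s * \<alpha> s (y t) * \<xi> s t)"

definition Rsingle :: "'s \<Rightarrow> 'd::zero \<Rightarrow> ('s \<Rightarrow> 'd)" where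
  "Rsingle s d = (\<lambda>u. if u = s then d else 0)"

definition R_aut :: "('s \<Rightarrow> 's \<Rightarrow> 's) \<Rightarrow> 's \<Rightarrow> 's set \<Rightarrow>
    ('s \<Rightarrow> 'd::division_ring \<Rightarrow> 'd) \<Rightarrow> ('s \<Rightarrow> 's \<Rightarrow> 'd) \<Rightarrow>
    (('s \<Rightarrow> 'd) \<Rightarrow> ('s \<Rightarrow> 'd)) \<Rightarrow> bool" where
  "R_aut m z S \<alpha> \<xi> \<gamma> \<longleftrightarrow> bij_betw \<gamma> (Rcarrier z S) (Rcarrier z S) \<and>
     (\<forall>x\<in>Rcarrier z S. \<forall>y\<in>Rcarrier z S. \<gamma> (Radd x y) = Radd (\<gamma> x) (\<gamma> y)) \<and>
     (\<forall>x\<in>Rcarrier z S. \<forall>y\<in>Rcarrier z S. \<gamma> (Rmult m z S \<alpha> \<xi> x y) = Rmult m z S \<alpha> \<xi> (\<gamma> x) (\<gamma> y))"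

definition R_aut0 :: "('s \<Rightarrow> 's \<Rightarrow> 's) \<Rightarrow> 's \<Rightarrow> 's set \<Rightarrow> 's set \<Rightarrow>
    ('s \<Rightarrow> 'd::division_ring \<Rightarrow> 'd) \<Rightarrow> ('s \<Rightarrow> 's \<Rightarrow> 'd) \<Rightarrow>
    (('s \<Rightarrow> 'd) \<Rightarrow> ('s \<Rightarrow> 'd)) \<Rightarrow> bool" where
  "R_aut0 m z E S \<alpha> \<xi> \<gamma> \<longleftrightarrow> R_aut m z S \<alpha> \<xi> \<gamma> \<and>
     \<gamma> ` ((\<lambda>e. Rsingle e 1) ` E) = (\<lambda>e. Rsingle e 1) ` E"

text \<open>Im Phi: Phi sends the coset of gamma0 in Aut_0 R, written
gamma0(d s) = mu_e(d) eta(s) phi(s), to phi; every coset of Inn R contains such a gamma0.\<close>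
definition ImPhi :: "('s \<Rightarrow> 's \<Rightarrow> 's) \<Rightarrow> 's \<Rightarrow> 's set \<Rightarrow> 's set \<Rightarrow>
    ('s \<Rightarrow> 'd::division_ring \<Rightarrow> 'd) \<Rightarrow> ('s \<Rightarrow> 's \<Rightarrow> 'd) \<Rightarrow> ('s \<Rightarrow> 's) set" where
  "ImPhi m z E S \<alpha> \<xi> = {\<phi>. sg_aut m S \<phi> \<and>
     (\<exists>\<gamma> \<mu> \<eta>. R_aut0 m z E S \<alpha> \<xi> \<gamma> \<and> group_elt z E S \<mu> \<eta> \<and>
        (\<forall>d. \<forall>s\<in>S - {z}. \<forall>e\<in>E. m e s = s \<longrightarrow>
           \<gamma> (Rsingle s d) = Rsingle (\<phi> s) (\<mu> e d * \<eta> s)))}"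

end

theory Submission
  imports Defs
begin

text \<open>An automorphism of \<open>R\<close> fixing \<open>E\<close> acts on monomials as \<open>\<gamma>(d s) = \<mu>\<^sub>e(d) \<eta>(s) \<phi>(s)\<close>,
  where \<open>e\<close> is the left unit of \<open>s\<close>. Comparing \<open>\<gamma>\<close> on a product of two monomials with the product
  of their images, and cancelling in \<open>D\<close>, shows that such a monomial map is multiplicative exactly
  when the pair \<open>(\<mu>\<inverse>, s \<mapsto> \<mu>\<^sub>e\<inverse>(\<eta>(s))\<inverse>)\<close> carries \<open>(\<alpha>, \<xi>)\<close> to \<open>(\<alpha>\<^sup>\<phi>, \<xi>\<^sup>\<phi>)\<close>. This passage
  between the two kinds of data is an involution, so it works in both directions: every \<open>\<phi>\<close> in the
  image of \<open>\<Phi>\<close> stabilizes \<open>[\<alpha>, \<xi>]\<close>, and a pair witnessing \<open>[\<alpha>, \<xi>] = [\<alpha>\<^sup>\<phi>, \<xi>\<^sup>\<phi>]\<close> yields a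
  monomial automorphism over \<open>\<phi>\<close>. Normality of the cocycle forces \<open>\<eta> = 1\<close> on \<open>E\<close>, so this
  automorphism fixes \<open>E\<close>.\<close>

section \<open>Automorphisms of a division ring\<close>

lemma dr_autD:
  assumes "dr_aut \<sigma>"
  shows "bij \<sigma>" "\<sigma> (x + y) = \<sigma> x + \<sigma> y" "\<sigma> (x * y) = \<sigma> x * \<sigma> y"
  using assms unfolding dr_aut_def by auto

lemma dr_aut_0: "dr_aut \<sigma> \<Longrightarrow> \<sigma> 0 = (0::'d::division_ring)"
  using dr_autD(2)[of \<sigma> 0 0] by simp

lemma dr_aut_eq_iff: "dr_aut \<sigma> \<Longrightarrow> \<sigma> x = \<sigma> y \<longleftrightarrow> x = y"
  by (meson bij_is_inj dr_autD(1) injD)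

lemma dr_aut_eq_0_iff: "dr_aut \<sigma> \<Longrightarrow> \<sigma> x = 0 \<longleftrightarrow> x = (0::'d::division_ring)"
  using dr_aut_eq_iff dr_aut_0 by metis

lemma dr_aut_1: "dr_aut \<sigma> \<Longrightarrow> \<sigma> 1 = (1::'d::division_ring)"
  by (metis dr_autD(3) dr_aut_eq_0_iff mult_cancel_right2)

lemma dr_aut_inverse: "dr_aut \<sigma> \<Longrightarrow> \<sigma> (inverse x) = inverse (\<sigma> (x::'d::division_ring))"
  by (metis dr_autD(3) dr_aut_0 dr_aut_1 inverse_unique inverse_zero right_inverse)

lemma dr_aut_sum: "dr_aut \<sigma> \<Longrightarrow> \<sigma> (sum f A) = (\<Sum>i\<in>A. \<sigma> (f i :: 'd::division_ring))"
  by (induction A rule: infinite_finite_induct) (simp_all add: dr_aut_0 dr_autD(2))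

lemma dr_aut_inv_f: "dr_aut \<sigma> \<Longrightarrow> inv \<sigma> (\<sigma> x) = x"
  by (simp add: bij_is_inj dr_autD(1))

lemma dr_aut_f_inv: "dr_aut \<sigma> \<Longrightarrow> \<sigma> (inv \<sigma> x) = x"
  by (simp add: bij_is_surj dr_autD(1) surj_f_inv_f)

lemma dr_aut_inv: "dr_aut \<sigma> \<Longrightarrow> dr_aut (inv \<sigma>)"
  unfolding dr_aut_def
  by (metis bij_imp_bij_inv bij_is_inj inv_f_f bij_is_surj surj_f_inv_f)

lemma rho_inverse: "rho (inverse a) x = inverse a * x * (a::'d::division_ring)"
  by (simp add: rho_def)

lemma dr_aut_inv_eq_iff: "dr_aut \<sigma> \<Longrightarrow> inv \<sigma> x = y \<longleftrightarrow> x = \<sigma> y"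
  using dr_aut_f_inv dr_aut_inv_f by metis

lemma eq_inverse_mult_iff: "p \<noteq> 0 \<Longrightarrow> u = inverse p * v \<longleftrightarrow> p * u = (v::'d::division_ring)"
  by (auto simp flip: mult.assoc)

lemma eq_mult_inverse_iff: "p \<noteq> 0 \<Longrightarrow> u = v * inverse p \<longleftrightarrow> u * p = (v::'d::division_ring)"
  by (auto simp: mult.assoc)

lemma conj_eq_iff:
  fixes a u v :: "'d::division_ring"
  assumes "a \<noteq> 0"
  shows "u = inverse a * v * a \<longleftrightarrow> a * u = v * a"
  using assms by (simp add: eq_inverse_mult_iff mult.assoc)

text \<open>Expanding the multiplicativity of a monomial map on a product of two monomials, with
  \<open>a, b, c\<close> the units attached to \<open>s, t, st\<close> and \<open>x, y\<close> the cocycle values at \<open>(s,t)\<close> and \<open>(\<phi> s,\<phi> t)\<close>.\<close>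
lemma monomial_identity_iff:
  fixes \<mu>e \<mu>f \<alpha>1 \<alpha>2 :: "'d::division_ring \<Rightarrow> 'd"
  assumes \<mu>e: "dr_aut \<mu>e" and \<mu>f: "dr_aut \<mu>f" and \<alpha>1: "dr_aut \<alpha>1" and \<alpha>2: "dr_aut \<alpha>2"
    and "b \<noteq> 0" "c \<noteq> 0" "x \<noteq> 0"
  shows "(\<forall>d1 d2. \<mu>e (d1 * \<alpha>1 d2 * x) * c = \<mu>e d1 * a * \<alpha>2 (\<mu>f d2 * b) * y)
    \<longleftrightarrow> (\<forall>d. \<mu>e (\<alpha>1 d) * a = a * \<alpha>2 (\<mu>f d)) \<and> \<mu>e x * c = a * \<alpha>2 b * y"
  (is "?H \<longleftrightarrow> ?K \<and> ?X")
proof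
  assume H: ?H
  show "?K \<and> ?X"
  proof
    show X: ?X
      using H[rule_format, of 1 1] by (simp add: dr_aut_1[OF \<mu>e] dr_aut_1[OF \<mu>f] dr_aut_1[OF \<alpha>1])
    have "\<alpha>2 b * y \<noteq> 0"
    proof -
      have "\<mu>e x * c \<noteq> 0"
        using assms by (simp add: dr_aut_eq_0_iff[OF \<mu>e])
      then show ?thesis
        using X by (metis mult.assoc mult_zero_right)
    qed
    moreover have "\<mu>e (\<alpha>1 d) * a * (\<alpha>2 b * y) = a * \<alpha>2 (\<mu>f d) * (\<alpha>2 b * y)" for d
      using H[rule_format, of 1 d] X
      by (simp add: dr_aut_1[OF \<mu>e] dr_autD(3)[OF \<mu>e] dr_autD(3)[OF \<alpha>2] mult.assoc)
    ultimately show ?K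
      by simp
  qed
next
  assume KX: "?K \<and> ?X"
  show ?H
  proof (intro allI)
    fix d1 d2
    have "\<mu>e (d1 * \<alpha>1 d2 * x) * c = \<mu>e d1 * \<mu>e (\<alpha>1 d2) * (\<mu>e x * c)"
      by (simp add: dr_autD(3)[OF \<mu>e] mult.assoc)
    also have "\<dots> = \<mu>e d1 * (\<mu>e (\<alpha>1 d2) * a) * (\<alpha>2 b * y)"
      unfolding conjunct2[OF KX] by (simp add: mult.assoc)
    also have "\<dots> = \<mu>e d1 * a * \<alpha>2 (\<mu>f d2 * b) * y"
      using KX by (simp add: dr_autD(3)[OF \<alpha>2] mult.assoc)
    finally show "\<mu>e (d1 * \<alpha>1 d2 * x) * c = \<mu>e d1 * a * \<alpha>2 (\<mu>f d2 * b) * y" .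
  qed
qed

text \<open>The two conditions of \<open>monomial_identity_iff\<close>, restated for the dual data
  \<open>(\<mu>\<inverse>, inverse (\<mu>\<inverse> a))\<close> in the shape of the two clauses of \<open>act_eq\<close>.\<close>
lemma conj_iff_inv_conj:
  fixes \<mu>e \<mu>f \<alpha>1 \<alpha>2 :: "'d::division_ring \<Rightarrow> 'd"
  assumes \<mu>e: "dr_aut \<mu>e" and \<mu>f: "dr_aut \<mu>f" and "a \<noteq> 0"
  shows "(\<forall>d. \<mu>e (\<alpha>1 d) * a = a * \<alpha>2 (\<mu>f d))
    \<longleftrightarrow> (\<forall>d. inv \<mu>e (\<alpha>2 d) = rho (inverse (inv \<mu>e a)) (\<alpha>1 (inv \<mu>f d)))"
proof -
  have \<mu>e_rho: "\<mu>e (rho (inverse (inv \<mu>e a)) v) = inverse a * \<mu>e v * a" for v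
    by (simp add: rho_inverse dr_autD(3)[OF \<mu>e] dr_aut_inverse[OF \<mu>e] dr_aut_f_inv[OF \<mu>e])
  have inv_conj: "inv \<mu>e (\<alpha>2 d) = rho (inverse (inv \<mu>e a)) (\<alpha>1 (inv \<mu>f d))
      \<longleftrightarrow> a * \<alpha>2 d = \<mu>e (\<alpha>1 (inv \<mu>f d)) * a" for d
    by (simp only: dr_aut_inv_eq_iff[OF \<mu>e] \<mu>e_rho conj_eq_iff[OF \<open>a \<noteq> 0\<close>])
  show ?thesis
  proof (unfold inv_conj, intro iffI allI)
    fix d
    assume "\<forall>d. \<mu>e (\<alpha>1 d) * a = a * \<alpha>2 (\<mu>f d)"
    then show "a * \<alpha>2 d = \<mu>e (\<alpha>1 (inv \<mu>f d)) * a"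
      using spec[of _ "inv \<mu>f d"] by (simp add: dr_aut_f_inv[OF \<mu>f])
  next
    fix d
    assume "\<forall>d. a * \<alpha>2 d = \<mu>e (\<alpha>1 (inv \<mu>f d)) * a"
    then show "\<mu>e (\<alpha>1 d) * a = a * \<alpha>2 (\<mu>f d)"
      using spec[of _ "\<mu>f d"] by (simp add: dr_aut_inv_f[OF \<mu>f])
  qed
qed

lemma unit_eq_iff_inv_unit_eq:
  fixes \<mu>e \<mu>f \<alpha>1 \<alpha>2 :: "'d::division_ring \<Rightarrow> 'd"
  assumes \<mu>e: "dr_aut \<mu>e" and \<mu>f: "dr_aut \<mu>f" and \<alpha>1: "dr_aut \<alpha>1" and \<alpha>2: "dr_aut \<alpha>2"
    and "a \<noteq> 0" "b \<noteq> 0"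
    and K: "\<forall>d. \<mu>e (\<alpha>1 d) * a = a * \<alpha>2 (\<mu>f d)"
  shows "\<mu>e x * c = a * \<alpha>2 b * y
    \<longleftrightarrow> inv \<mu>e y = inverse (inv \<mu>e a) * \<alpha>1 (inverse (inv \<mu>f b)) * x * inverse (inverse (inv \<mu>e c))"
proof -
  have \<alpha>2b: "\<alpha>2 b \<noteq> 0"
    using assms by (simp add: dr_aut_eq_0_iff)
  have "\<mu>e (\<alpha>1 (inverse (inv \<mu>f b))) * a = a * inverse (\<alpha>2 b)"
    using K[rule_format, of "inverse (inv \<mu>f b)"] by (simp add: dr_aut_inverse \<mu>f \<alpha>2 dr_aut_f_inv)
  then have "\<mu>e (\<alpha>1 (inverse (inv \<mu>f b))) = a * inverse (\<alpha>2 b) * inverse a"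
    using \<open>a \<noteq> 0\<close> by (simp add: eq_mult_inverse_iff)
  have "\<mu>e (inverse (inv \<mu>e a) * \<alpha>1 (inverse (inv \<mu>f b)) * x * inverse (inverse (inv \<mu>e c)))
      = inverse a * \<mu>e (\<alpha>1 (inverse (inv \<mu>f b))) * \<mu>e x * c"
    by (simp add: dr_autD(3)[OF \<mu>e] dr_aut_inverse[OF \<mu>e] dr_aut_f_inv[OF \<mu>e])
  also have "\<dots> = inverse a * a * inverse (\<alpha>2 b) * inverse a * \<mu>e x * c"
    unfolding \<open>\<mu>e (\<alpha>1 (inverse (inv \<mu>f b))) = _\<close> by (simp add: mult.assoc)
  also have "\<dots> = inverse (\<alpha>2 b) * inverse a * (\<mu>e x * c)"
    using \<open>a \<noteq> 0\<close> by simp (simp add: mult.assoc)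
  finally have "\<mu>e (inverse (inv \<mu>e a) * \<alpha>1 (inverse (inv \<mu>f b)) * x * inverse (inverse (inv \<mu>e c)))
      = inverse (\<alpha>2 b) * inverse a * (\<mu>e x * c)" .
  then have "inv \<mu>e y = inverse (inv \<mu>e a) * \<alpha>1 (inverse (inv \<mu>f b)) * x * inverse (inverse (inv \<mu>e c))
      \<longleftrightarrow> y = inverse (\<alpha>2 b) * inverse a * (\<mu>e x * c)"
    by (simp add: dr_aut_inv_eq_iff[OF \<mu>e])
  also have "\<dots> \<longleftrightarrow> y = inverse (a * \<alpha>2 b) * (\<mu>e x * c)"
    using \<open>a \<noteq> 0\<close> \<alpha>2b by (simp add: nonzero_inverse_mult_distrib)
  also have "\<dots> \<longleftrightarrow> a * \<alpha>2 b * y = \<mu>e x * c"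
    using \<open>a \<noteq> 0\<close> \<alpha>2b by (simp add: eq_inverse_mult_iff)
  also have "\<dots> \<longleftrightarrow> \<mu>e x * c = a * \<alpha>2 b * y"
    by (rule eq_commute)
  finally show ?thesis
    by (rule sym)
qed

section \<open>Square-free semigroups\<close>

lemma sq_free_sgD:
  assumes "sq_free_sg m z E S"
  shows "\<forall>a\<in>S. \<forall>b\<in>S. m a b \<in> S"
    and "\<forall>a\<in>S. \<forall>b\<in>S. \<forall>c\<in>S. m (m a b) c = m a (m b c)"
    and "z \<in> S" and "\<forall>a\<in>S. m z a = z \<and> m a z = z"
    and "finite E" and "E \<subseteq> S" and "\<forall>e\<in>E. e \<noteq> z \<and> m e e = e"
    and "\<forall>e\<in>E. \<forall>f\<in>E. e \<noteq> f \<longrightarrow> m e f = z"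
    and "S = (\<Union>e\<in>E. \<Union>f\<in>E. eSf m S e f)"
    and "\<forall>e\<in>E. \<forall>f\<in>E. \<forall>x y. x \<in> eSf m S e f - {z} \<longrightarrow> y \<in> eSf m S e f - {z} \<longrightarrow> x = y"
  \<comment> \<open>not \<open>blast\<close>/\<open>simp\<close>: the defining equation of \<open>S\<close> mentions \<open>S\<close> again and makes them loop\<close>
  using assms unfolding sq_free_sg_def by - (elim conjE, assumption)+

locale square_free =
  fixes m :: "'s \<Rightarrow> 's \<Rightarrow> 's" and z :: 's and E S :: "'s set"
  assumes sq_free: "sq_free_sg m z E S"
begin

lemma mult_closed: "a \<in> S \<Longrightarrow> b \<in> S \<Longrightarrow> m a b \<in> S"
  using sq_free_sgD(1)[OF sq_free] by blast

lemma mult_assoc: "a \<in> S \<Longrightarrow> b \<in> S \<Longrightarrow> c \<in> S \<Longrightarrow> m (m a b) c = m a (m b c)"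
  using sq_free_sgD(2)[OF sq_free] by blast

lemma zero_in_S: "z \<in> S"
  using sq_free_sgD(3)[OF sq_free] .

lemma zero_mult: "a \<in> S \<Longrightarrow> m z a = z"
  and mult_zero: "a \<in> S \<Longrightarrow> m a z = z"
  using sq_free_sgD(4)[OF sq_free] by blast+

lemma finite_E: "finite E"
  using sq_free_sgD(5)[OF sq_free] .

lemma E_in_S: "e \<in> E \<Longrightarrow> e \<in> S"
  using sq_free_sgD(6)[OF sq_free] by blast

lemma E_neq_zero: "e \<in> E \<Longrightarrow> e \<noteq> z"
  and E_idem: "e \<in> E \<Longrightarrow> m e e = e"
  using sq_free_sgD(7)[OF sq_free] by blast+

lemma E_orth: "e \<in> E \<Longrightarrow> f \<in> E \<Longrightarrow> e \<noteq> f \<Longrightarrow> m e f = z"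
  using sq_free_sgD(8)[OF sq_free] by blast

lemma eSf_unique:
  "e \<in> E \<Longrightarrow> f \<in> E \<Longrightarrow> x \<in> eSf m S e f \<Longrightarrow> y \<in> eSf m S e f \<Longrightarrow> x \<noteq> z \<Longrightarrow> y \<noteq> z \<Longrightarrow> x = y"
  using sq_free_sgD(10)[OF sq_free] by blast

lemma E_idem_left: "e \<in> E \<Longrightarrow> s \<in> S \<Longrightarrow> m e (m e s) = m e s"
  using mult_assoc[of e e s] E_in_S E_idem by simp

lemma E_idem_right: "f \<in> E \<Longrightarrow> s \<in> S \<Longrightarrow> m (m s f) f = m s f"
  using mult_assoc[of s f f] E_in_S E_idem by simp

lemma units_absorb:
  assumes "e \<in> E" "f \<in> E" "s \<in> S" "m (m e s) f = s"
  shows "m e s = s" "m s f = s"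
proof -
  have eS: "e \<in> S" and fS: "f \<in> S"
    using assms E_in_S by auto
  have "m e s = m e (m (m e s) f)"
    using assms(4) by simp
  also have "\<dots> = m (m e (m e s)) f"
    using eS fS assms(3) by (simp add: mult_assoc mult_closed)
  also have "\<dots> = s"
    using assms E_idem_left by simp
  finally show "m e s = s" .
  have "m s f = m (m (m e s) f) f"
    using assms(4) by simp
  also have "\<dots> = m (m e s) f"
    using assms(2) by (rule E_idem_right) (use assms eS mult_closed in blast)
  also have "\<dots> = s"
    by (rule assms(4))
  finally show "m s f = s" .
qed

lemma units_exist:
  assumes "s \<in> S"
  obtains e f where "e \<in> E" "f \<in> E" "m e s = s" "m s f = s"
proof -
  obtain e f s0 where ef: "e \<in> E" "f \<in> E" "s0 \<in> S" "s = m (m e s0) f"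
    using assms sq_free_sgD(9)[OF sq_free] unfolding eSf_def by blast
  have e0: "m e s0 \<in> S"
    using ef E_in_S mult_closed by blast
  have "m e s = m (m e (m e s0)) f"
    unfolding ef(4) using ef e0 E_in_S by (simp add: mult_assoc)
  then have "m (m e s) f = s"
    using ef E_idem_left E_idem_right e0 by simp
  then show thesis
    using that units_absorb assms ef(1,2) by blast
qed

definition lft :: "'s \<Rightarrow> 's" where
  "lft s = (SOME e. e \<in> E \<and> m e s = s)"

lemma lft_in_E: "s \<in> S \<Longrightarrow> lft s \<in> E"
  and lft_mult: "s \<in> S \<Longrightarrow> m (lft s) s = s"
proof -
  assume "s \<in> S"
  then have "\<exists>e. e \<in> E \<and> m e s = s"
    using units_exist by blast
  then have "lft s \<in> E \<and> m (lft s) s = s"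
    unfolding lft_def by (rule someI_ex)
  then show "lft s \<in> E" "m (lft s) s = s"
    by auto
qed

lemma lft_unique:
  assumes "s \<in> S" "s \<noteq> z" "e \<in> E" "m e s = s"
  shows "lft s = e"
proof (rule ccontr)
  assume "lft s \<noteq> e"
  have "s = m e (m (lft s) s)"
    using assms lft_mult by simp
  also have "\<dots> = m (m e (lft s)) s"
    using assms lft_in_E E_in_S by (simp add: mult_assoc)
  also have "\<dots> = z"
    using \<open>lft s \<noteq> e\<close> assms E_orth lft_in_E zero_mult by simp
  finally show False
    using assms(2) by simp
qed

lemma lft_E: "e \<in> E \<Longrightarrow> lft e = e"
  using lft_unique E_in_S E_neq_zero E_idem by blast

lemma lft_mult_eq:
  assumes "s \<in> S" "t \<in> S" "m s t \<noteq> z"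
  shows "lft (m s t) = lft s"
proof -
  have "m (lft s) (m s t) = m s t"
    using assms lft_in_E lft_mult E_in_S by (simp flip: mult_assoc)
  then show ?thesis
    using lft_unique assms lft_in_E mult_closed by blast
qed

lemma mult_lft_right:
  assumes "s \<in> S" "t \<in> S" "m s t \<noteq> z"
  shows "m s (lft t) = s"
proof -
  obtain f where f: "f \<in> E" "m s f = s"
    using units_exist assms(1) by blast
  have "f = lft t"
  proof (rule ccontr)
    assume "f \<noteq> lft t"
    have "m s t = m (m s f) (m (lft t) t)"
      using f assms lft_mult by simp
    also have "\<dots> = m s (m (m f (lft t)) t)"
      using assms f(1) lft_in_E E_in_S by (simp only: mult_assoc mult_closed)
    also have "\<dots> = z"
      using \<open>f \<noteq> lft t\<close> assms f E_orth lft_in_E zero_mult mult_zero by simp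
    finally show False
      using assms(3) by simp
  qed
  then show ?thesis
    using f by simp
qed

lemma idem_in_E:
  assumes "s \<in> S" "s \<noteq> z" "m s s = s"
  shows "s \<in> E"
proof -
  let ?e = "lft s"
  have e: "?e \<in> E"
    using lft_in_E[OF assms(1)] .
  have "s = m (m ?e s) ?e"
    using assms mult_lft_right lft_mult by simp
  then have "s \<in> eSf m S ?e ?e"
    unfolding eSf_def using assms(1) by blast
  moreover have "?e = m (m ?e ?e) ?e"
    using e E_idem by simp
  then have "?e \<in> eSf m S ?e ?e"
    unfolding eSf_def using e E_in_S by blast
  ultimately have "s = ?e"
    using eSf_unique e assms(2) E_neq_zero by blast
  then show ?thesis
    using e by simp
qed

lemma finite_S: "finite S"
proof -
  have "finite (eSf m S e f - {z})" if "e \<in> E" "f \<in> E" for e f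
  proof (cases "eSf m S e f - {z} = {}")
    case False
    then obtain x where "x \<in> eSf m S e f - {z}"
      by blast
    then have "eSf m S e f - {z} \<subseteq> {x}"
      using eSf_unique[OF that] by blast
    then show ?thesis
      using finite_subset by blast
  qed (simp only: finite.emptyI)
  then have "finite (insert z (\<Union>e\<in>E. \<Union>f\<in>E. eSf m S e f - {z}))"
    using finite_E by blast
  moreover have "S \<subseteq> insert z (\<Union>e\<in>E. \<Union>f\<in>E. eSf m S e f - {z})"
    using sq_free_sgD(9)[OF sq_free] by blast
  ultimately show ?thesis
    using finite_subset by blast
qed


definition factorizations :: "'s \<Rightarrow> ('s \<times> 's) set" where
  "factorizations u = {(s, t). s \<in> S - {z} \<and> t \<in> S - {z} \<and> m s t = u \<and> u \<noteq> z}"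

lemma finite_factorizations: "finite (factorizations u)"
  by (rule finite_subset[of _ "S \<times> S"]) (auto simp: factorizations_def finite_S)

lemma factorizations_outside: "u \<notin> S - {z} \<Longrightarrow> factorizations u = {}"
  unfolding factorizations_def using mult_closed by blast

lemma act_eq_iff:
  "act_eq m z E S \<mu> \<eta> \<alpha> \<xi> \<beta> \<zeta> \<longleftrightarrow>
    (\<forall>s\<in>S - {z}. \<forall>t\<in>S - {z}. m s t \<noteq> z \<longrightarrow>
      (\<forall>d. \<mu> (lft s) (\<beta> s d) = rho (\<eta> s) (\<alpha> s (\<mu> (lft t) d))) \<and>
      \<mu> (lft s) (\<zeta> s t) = \<eta> s * \<alpha> s (\<eta> t) * \<xi> s t * inverse (\<eta> (m s t)))"
  (is "?act \<longleftrightarrow> (\<forall>s\<in>S - {z}. \<forall>t\<in>S - {z}. m s t \<noteq> z \<longrightarrow> ?conj s t \<and> ?unit s t)")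
proof
  assume act: ?act
  show "\<forall>s\<in>S - {z}. \<forall>t\<in>S - {z}. m s t \<noteq> z \<longrightarrow> ?conj s t \<and> ?unit s t"
  proof (intro ballI impI conjI)
    fix s t
    assume s: "s \<in> S - {z}" and t: "t \<in> S - {z}" and st: "m s t \<noteq> z"
    have "m (m (lft s) s) (lft t) = s"
      using s t st lft_mult mult_lft_right by simp
    then have "\<mu> (lft s) \<circ> \<beta> s = rho (\<eta> s) \<circ> \<alpha> s \<circ> \<mu> (lft t)"
      using act s t lft_in_E unfolding act_eq_def by blast
    then show "?conj s t"
      by (simp add: fun_eq_iff)
    show "?unit s t"
      using act s t st lft_in_E lft_mult unfolding act_eq_def by blast
  qed
next
  assume pointwise: "\<forall>s\<in>S - {z}. \<forall>t\<in>S - {z}. m s t \<noteq> z \<longrightarrow> ?conj s t \<and> ?unit s t"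
  show ?act
    unfolding act_eq_def
  proof (intro conjI ballI allI impI)
    fix s e f
    assume s: "s \<in> S - {z}" and e: "e \<in> E" and f: "f \<in> E" and "m (m e s) f = s"
    then have "m e s = s" "m s f = s"
      using units_absorb by auto
    then have "lft s = e" "lft f = f" "f \<in> S - {z}"
      using s e f lft_unique lft_E E_in_S E_neq_zero by auto
    then show "\<mu> e \<circ> \<beta> s = rho (\<eta> s) \<circ> \<alpha> s \<circ> \<mu> f"
      using pointwise s \<open>m s f = s\<close> by (auto simp: fun_eq_iff)
  next
    fix s t e
    assume s: "s \<in> S - {z}" and t: "t \<in> S - {z}" and "e \<in> E" "m e s = s" and st: "m s t \<noteq> z"
    then have "lft s = e"
      using lft_unique by blast
    moreover have "\<mu> (lft s) (\<zeta> s t) = \<eta> s * \<alpha> s (\<eta> t) * \<xi> s t * inverse (\<eta> (m s t))"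
      using pointwise s t st by blast
    ultimately show "\<mu> e (\<zeta> s t) = \<eta> s * \<alpha> s (\<eta> t) * \<xi> s t * inverse (\<eta> (m s t))"
      by simp
  qed
qed

lemma act_eq_cong:
  assumes "\<And>e. e \<in> E \<Longrightarrow> \<mu>' e = \<mu> e" and "\<And>s. s \<in> S - {z} \<Longrightarrow> \<eta>' s = \<eta> s"
  shows "act_eq m z E S \<mu>' \<eta>' \<alpha> \<xi> \<beta> \<zeta> \<longleftrightarrow> act_eq m z E S \<mu> \<eta> \<alpha> \<xi> \<beta> \<zeta>"
  unfolding act_eq_iff using assms lft_in_E mult_closed by auto

text \<open>\<open>(\<mu>, \<eta>) \<mapsto> (\<mu>\<inverse>, dual_eta \<mu> \<eta>)\<close> is an involution (\<open>dual_eta_dual\<close>) exchanging the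
  coefficients \<open>\<gamma>(d s) = \<mu>\<^sub>e(d) \<eta>(s) \<phi>(s)\<close> of a monomial automorphism with the pair acting on
  \<open>(\<alpha>, \<xi>)\<close> (\<open>act_eq_dual_iff_monomial_hom\<close>).\<close>
definition dual_eta :: "('s \<Rightarrow> 'd \<Rightarrow> 'd) \<Rightarrow> ('s \<Rightarrow> 'd) \<Rightarrow> 's \<Rightarrow> 'd::division_ring" where
  "dual_eta \<mu> \<eta> s = inverse (inv (\<mu> (lft s)) (\<eta> s))"

lemma group_elt_dual:
  assumes "group_elt z E S \<mu> \<eta>"
  shows "group_elt z E S (\<lambda>e. inv (\<mu> e)) (dual_eta \<mu> \<eta>)"
  unfolding group_elt_def dual_eta_def
proof (intro conjI ballI)
  show "dr_aut (inv (\<mu> e))" if "e \<in> E" for e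
    using assms that dr_aut_inv unfolding group_elt_def by blast
  show "inverse (inv (\<mu> (lft s)) (\<eta> s)) \<noteq> 0" if "s \<in> S - {z}" for s
  proof -
    have "dr_aut (\<mu> (lft s))" and "\<eta> s \<noteq> 0"
      using assms that lft_in_E unfolding group_elt_def by blast+
    then show ?thesis
      by (simp add: dr_aut_eq_0_iff[OF dr_aut_inv])
  qed
qed

lemma dual_eta_dual:
  assumes "group_elt z E S \<mu> \<eta>" "s \<in> S"
  shows "dual_eta (\<lambda>e. inv (\<mu> e)) (dual_eta \<mu> \<eta>) s = \<eta> s"
proof -
  have "dr_aut (\<mu> (lft s))"
    using assms lft_in_E unfolding group_elt_def by blast
  then show ?thesis
    unfolding dual_eta_def by (simp add: inv_inv_eq dr_autD(1) dr_aut_inverse dr_aut_f_inv)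
qed

end

locale sg_automorphism = square_free m z E S for m :: "'s \<Rightarrow> 's \<Rightarrow> 's" and z E S +
  fixes \<phi> :: "'s \<Rightarrow> 's"
  assumes aut: "sg_aut m S \<phi>"
begin

abbreviation \<psi> where
  "\<psi> \<equiv> inv_into S \<phi>"

lemma phi_bij: "bij_betw \<phi> S S"
  using aut unfolding sg_aut_def by blast

lemma phi_mult: "s \<in> S \<Longrightarrow> t \<in> S \<Longrightarrow> \<phi> (m s t) = m (\<phi> s) (\<phi> t)"
  using aut unfolding sg_aut_def by blast

lemma phi_in_S: "s \<in> S \<Longrightarrow> \<phi> s \<in> S"
  using bij_betw_apply[OF phi_bij] .

lemma phi_eq_iff: "s \<in> S \<Longrightarrow> t \<in> S \<Longrightarrow> \<phi> s = \<phi> t \<longleftrightarrow> s = t"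
  using bij_betw_imp_inj_on[OF phi_bij] by (auto dest: inj_onD)

lemma psi_in_S: "u \<in> S \<Longrightarrow> \<psi> u \<in> S"
  using bij_betw_apply[OF bij_betw_inv_into[OF phi_bij]] .

lemma phi_psi: "u \<in> S \<Longrightarrow> \<phi> (\<psi> u) = u"
  using bij_betw_inv_into_right[OF phi_bij] .

lemma psi_phi: "s \<in> S \<Longrightarrow> \<psi> (\<phi> s) = s"
  using bij_betw_inv_into_left[OF phi_bij] .

lemma psi_mult: "u \<in> S \<Longrightarrow> v \<in> S \<Longrightarrow> \<psi> (m u v) = m (\<psi> u) (\<psi> v)"
  using phi_mult[of "\<psi> u" "\<psi> v"] psi_in_S phi_psi psi_phi mult_closed by metis

lemma phi_zero: "\<phi> z = z"
proof -
  have "\<phi> z = \<phi> (m z (\<psi> z))"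
    using zero_mult psi_in_S zero_in_S by simp
  also have "\<dots> = z"
    using phi_mult phi_psi psi_in_S zero_in_S mult_zero phi_in_S by simp
  finally show ?thesis .
qed

lemma phi_eq_zero_iff: "s \<in> S \<Longrightarrow> \<phi> s = z \<longleftrightarrow> s = z"
  using phi_eq_iff[OF _ zero_in_S] phi_zero by simp

lemma psi_eq_zero_iff: "u \<in> S \<Longrightarrow> \<psi> u = z \<longleftrightarrow> u = z"
  using phi_eq_zero_iff psi_in_S phi_psi by metis

lemma phi_E_image: "\<phi> ` E = E"
proof
  show "\<phi> ` E \<subseteq> E"
  proof
    fix e
    assume "e \<in> \<phi> ` E"
    then obtain e' where e': "e' \<in> E" and e: "e = \<phi> e'"
      by blast
    then have "m e e = e"
      using phi_mult[of e' e'] E_in_S E_idem by simp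
    then show "e \<in> E"
      using e e' idem_in_E phi_in_S phi_eq_zero_iff E_in_S E_neq_zero by blast
  qed
  show "E \<subseteq> \<phi> ` E"
  proof
    fix e
    assume e: "e \<in> E"
    then have "m (\<psi> e) (\<psi> e) = \<psi> e"
      using psi_mult[of e e] E_in_S E_idem by simp
    then have "\<psi> e \<in> E"
      using e idem_in_E psi_in_S psi_eq_zero_iff E_in_S E_neq_zero by blast
    then show "e \<in> \<phi> ` E"
      using e E_in_S phi_psi by (metis image_eqI)
  qed
qed

lemma phi_preimageE:
  assumes "u \<in> S - {z}"
  obtains s where "s \<in> S - {z}" "u = \<phi> s"
proof
  show "\<psi> u \<in> S - {z}"
    using assms psi_in_S psi_eq_zero_iff by auto
  show "u = \<phi> (\<psi> u)"
    using assms phi_psi by auto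
qed

lemma bij_betw_factorizations:
  assumes "u \<in> S"
  shows "bij_betw (map_prod \<phi> \<phi>) (factorizations u) (factorizations (\<phi> u))"
proof (rule bij_betw_byWitness[where f' = "map_prod \<psi> \<psi>"])
  show "\<forall>p\<in>factorizations u. map_prod \<psi> \<psi> (map_prod \<phi> \<phi> p) = p"
    unfolding factorizations_def using psi_phi by auto
  show "\<forall>p\<in>factorizations (\<phi> u). map_prod \<phi> \<phi> (map_prod \<psi> \<psi> p) = p"
    unfolding factorizations_def using phi_psi by auto
  show "map_prod \<phi> \<phi> ` factorizations u \<subseteq> factorizations (\<phi> u)"
    unfolding factorizations_def using assms phi_in_S phi_eq_zero_iff phi_mult by auto
  show "map_prod \<psi> \<psi> ` factorizations (\<phi> u) \<subseteq> factorizations u"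
    unfolding factorizations_def
    using assms psi_in_S psi_eq_zero_iff psi_phi phi_zero by (auto simp flip: psi_mult)
qed

end

section \<open>The crossed semigroup ring\<close>

lemma Rsingle_inject: "Rsingle u a = Rsingle u b \<longleftrightarrow> a = b"
proof
  assume "Rsingle u a = Rsingle u b"
  then have "Rsingle u a u = Rsingle u b u"
    by simp
  then show "a = b"
    by (simp add: Rsingle_def)
qed simp

lemma Rsingle_in_Rcarrier: "s \<in> S \<Longrightarrow> s \<noteq> z \<Longrightarrow> Rsingle s d \<in> Rcarrier z S"
  unfolding Rcarrier_def Rsingle_def by auto

locale crossed_ring = square_free m z E S for m :: "'s \<Rightarrow> 's \<Rightarrow> 's" and z E S +
  fixes \<alpha> :: "'s \<Rightarrow> 'd::division_ring \<Rightarrow> 'd" and \<xi> :: "'s \<Rightarrow> 's \<Rightarrow> 'd"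
  assumes cocycle: "cocycle m z S \<alpha> \<xi>"
begin

lemma alpha_dr_aut: "s \<in> S - {z} \<Longrightarrow> dr_aut (\<alpha> s)"
  using cocycle unfolding cocycle_def by blast

lemma xi_neq_zero: "s \<in> S \<Longrightarrow> t \<in> S \<Longrightarrow> m s t \<noteq> z \<Longrightarrow> \<xi> s t \<noteq> 0"
  using cocycle unfolding cocycle_def by blast

lemma Rmult_eq_sum:
  "Rmult m z S \<alpha> \<xi> x y u = (\<Sum>(s, t)\<in>factorizations u. x s * \<alpha> s (y t) * \<xi> s t)"
  by (simp add: Rmult_def factorizations_def)

lemma Rmult_Rsingle:
  assumes "s \<in> S - {z}" "t \<in> S - {z}" "m s t \<noteq> z"
  shows "Rmult m z S \<alpha> \<xi> (Rsingle s a) (Rsingle t b) = Rsingle (m s t) (a * \<alpha> s b * \<xi> s t)"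
proof
  fix u
  have "Rmult m z S \<alpha> \<xi> (Rsingle s a) (Rsingle t b) u
      = (\<Sum>p\<in>factorizations u. if p = (s, t) then a * \<alpha> s b * \<xi> s t else 0)"
    unfolding Rmult_eq_sum
  proof (rule sum.cong[OF refl], clarify)
    fix s' t'
    assume "(s', t') \<in> factorizations u"
    then have "\<alpha> s' 0 = 0"
      unfolding factorizations_def using alpha_dr_aut dr_aut_0 by blast
    then show "Rsingle s a s' * \<alpha> s' (Rsingle t b t') * \<xi> s' t'
        = (if (s', t') = (s, t) then a * \<alpha> s b * \<xi> s t else 0)"
      unfolding Rsingle_def by auto
  qed
  also have "\<dots> = (if (s, t) \<in> factorizations u then a * \<alpha> s b * \<xi> s t else 0)"
    by (rule sum.delta[OF finite_factorizations])
  also have "\<dots> = Rsingle (m s t) (a * \<alpha> s b * \<xi> s t) u"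
    using assms unfolding Rsingle_def factorizations_def by auto
  finally show "Rmult m z S \<alpha> \<xi> (Rsingle s a) (Rsingle t b) u = Rsingle (m s t) (a * \<alpha> s b * \<xi> s t) u" .
qed

end

section \<open>Monomial automorphisms\<close>

locale crossed_ring_aut =
  crossed_ring m z E S \<alpha> \<xi> + sg_automorphism m z E S \<phi>
  for m :: "'s \<Rightarrow> 's \<Rightarrow> 's" and z E S and \<alpha> :: "'s \<Rightarrow> 'd::division_ring \<Rightarrow> 'd" and \<xi> \<phi>
begin

definition monomial_hom :: "('s \<Rightarrow> 'd \<Rightarrow> 'd) \<Rightarrow> ('s \<Rightarrow> 'd) \<Rightarrow> bool" where
  "monomial_hom \<mu> \<eta> \<longleftrightarrow> (\<forall>s\<in>S - {z}. \<forall>t\<in>S - {z}. m s t \<noteq> z \<longrightarrow> (\<forall>d1 d2.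
     \<mu> (lft s) (d1 * \<alpha> s d2 * \<xi> s t) * \<eta> (m s t)
       = \<mu> (lft s) d1 * \<eta> s * \<alpha> (\<phi> s) (\<mu> (lft t) d2 * \<eta> t) * \<xi> (\<phi> s) (\<phi> t)))"

lemma act_eq_dual_iff_monomial_hom:
  assumes \<mu>\<eta>: "group_elt z E S \<mu> \<eta>"
  shows "act_eq m z E S (\<lambda>e. inv (\<mu> e)) (dual_eta \<mu> \<eta>) \<alpha> \<xi> (\<lambda>s. \<alpha> (\<phi> s)) (\<lambda>s t. \<xi> (\<phi> s) (\<phi> t))
    \<longleftrightarrow> monomial_hom \<mu> \<eta>"
proof -
  have "(\<forall>d. inv (\<mu> (lft s)) (\<alpha> (\<phi> s) d) = rho (dual_eta \<mu> \<eta> s) (\<alpha> s (inv (\<mu> (lft t)) d))) \<and>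
      inv (\<mu> (lft s)) (\<xi> (\<phi> s) (\<phi> t))
        = dual_eta \<mu> \<eta> s * \<alpha> s (dual_eta \<mu> \<eta> t) * \<xi> s t * inverse (dual_eta \<mu> \<eta> (m s t))
    \<longleftrightarrow> (\<forall>d1 d2. \<mu> (lft s) (d1 * \<alpha> s d2 * \<xi> s t) * \<eta> (m s t)
       = \<mu> (lft s) d1 * \<eta> s * \<alpha> (\<phi> s) (\<mu> (lft t) d2 * \<eta> t) * \<xi> (\<phi> s) (\<phi> t))"
    if s: "s \<in> S - {z}" and t: "t \<in> S - {z}" and st: "m s t \<noteq> z" for s t
  proof -
    have \<mu>s: "dr_aut (\<mu> (lft s))" and \<mu>t: "dr_aut (\<mu> (lft t))"
      using \<mu>\<eta> s t lft_in_E unfolding group_elt_def by auto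
    have \<alpha>s: "dr_aut (\<alpha> s)" and \<alpha>\<phi>s: "dr_aut (\<alpha> (\<phi> s))"
      using s alpha_dr_aut phi_in_S phi_eq_zero_iff by auto
    have units: "\<eta> s \<noteq> 0" "\<eta> t \<noteq> 0" "\<eta> (m s t) \<noteq> 0"
      using \<mu>\<eta> s t st mult_closed unfolding group_elt_def by auto
    have "\<xi> s t \<noteq> 0"
      using s t st xi_neq_zero by blast
    note conj = conj_iff_inv_conj[OF \<mu>s \<mu>t units(1), of "\<alpha> s" "\<alpha> (\<phi> s)"]
    note unit = unit_eq_iff_inv_unit_eq[OF \<mu>s \<mu>t \<alpha>s \<alpha>\<phi>s units(1,2),
        of "\<xi> s t" "\<eta> (m s t)" "\<xi> (\<phi> s) (\<phi> t)"]
    show ?thesis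
      unfolding monomial_identity_iff[OF \<mu>s \<mu>t \<alpha>s \<alpha>\<phi>s units(2,3) \<open>\<xi> s t \<noteq> 0\<close>]
      using conj unit s t st lft_mult_eq by (auto simp: dual_eta_def)
  qed
  then show ?thesis
    unfolding act_eq_iff monomial_hom_def by (intro ball_cong refl imp_cong) blast+
qed

lemma monomial_hom_if_R_aut:
  assumes \<gamma>: "R_aut m z S \<alpha> \<xi> \<gamma>"
    and single: "\<And>s d. s \<in> S - {z} \<Longrightarrow> \<gamma> (Rsingle s d) = Rsingle (\<phi> s) (\<mu> (lft s) d * \<eta> s)"
  shows "monomial_hom \<mu> \<eta>"
  unfolding monomial_hom_def
proof (intro ballI impI allI)
  fix s t d1 d2
  assume s: "s \<in> S - {z}" and t: "t \<in> S - {z}" and st: "m s t \<noteq> z"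
  have st': "m s t \<in> S - {z}"
    using s t st mult_closed by blast
  have \<phi>s: "\<phi> s \<in> S - {z}" and \<phi>t: "\<phi> t \<in> S - {z}"
    using s t phi_in_S phi_eq_zero_iff by auto
  have \<phi>st: "m (\<phi> s) (\<phi> t) = \<phi> (m s t)"
    using s t phi_mult by simp
  then have \<phi>st0: "m (\<phi> s) (\<phi> t) \<noteq> z"
    using st' phi_eq_zero_iff by simp
  have "\<gamma> (Rmult m z S \<alpha> \<xi> (Rsingle s d1) (Rsingle t d2)) = \<gamma> (Rsingle (m s t) (d1 * \<alpha> s d2 * \<xi> s t))"
    unfolding Rmult_Rsingle[OF s t st] ..
  also have "\<dots> = Rsingle (\<phi> (m s t)) (\<mu> (lft s) (d1 * \<alpha> s d2 * \<xi> s t) * \<eta> (m s t))"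
    using s t st by (simp add: single[OF st'] lft_mult_eq)
  finally have product:
    "\<gamma> (Rmult m z S \<alpha> \<xi> (Rsingle s d1) (Rsingle t d2))
      = Rsingle (\<phi> (m s t)) (\<mu> (lft s) (d1 * \<alpha> s d2 * \<xi> s t) * \<eta> (m s t))" .
  have "Rsingle s d1 \<in> Rcarrier z S" "Rsingle t d2 \<in> Rcarrier z S"
    using s t Rsingle_in_Rcarrier by auto
  then have "\<gamma> (Rmult m z S \<alpha> \<xi> (Rsingle s d1) (Rsingle t d2))
      = Rmult m z S \<alpha> \<xi> (\<gamma> (Rsingle s d1)) (\<gamma> (Rsingle t d2))"
    using \<gamma> unfolding R_aut_def by blast
  also have "\<dots> = Rsingle (\<phi> (m s t))
      (\<mu> (lft s) d1 * \<eta> s * \<alpha> (\<phi> s) (\<mu> (lft t) d2 * \<eta> t) * \<xi> (\<phi> s) (\<phi> t))"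
    unfolding single[OF s] single[OF t] Rmult_Rsingle[OF \<phi>s \<phi>t \<phi>st0] \<phi>st ..
  finally show "\<mu> (lft s) (d1 * \<alpha> s d2 * \<xi> s t) * \<eta> (m s t)
      = \<mu> (lft s) d1 * \<eta> s * \<alpha> (\<phi> s) (\<mu> (lft t) d2 * \<eta> t) * \<xi> (\<phi> s) (\<phi> t)"
    unfolding product Rsingle_inject .
qed

definition monomial_map :: "('s \<Rightarrow> 'd \<Rightarrow> 'd) \<Rightarrow> ('s \<Rightarrow> 'd) \<Rightarrow> ('s \<Rightarrow> 'd) \<Rightarrow> 's \<Rightarrow> 'd" where
  "monomial_map \<mu> \<eta> x = (\<lambda>u. if u \<in> S - {z} then \<mu> (lft (\<psi> u)) (x (\<psi> u)) * \<eta> (\<psi> u) else 0)"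

lemma monomial_map_phi: "s \<in> S - {z} \<Longrightarrow> monomial_map \<mu> \<eta> x (\<phi> s) = \<mu> (lft s) (x s) * \<eta> s"
  using phi_in_S phi_eq_zero_iff psi_phi unfolding monomial_map_def by auto

lemma monomial_map_outside: "u \<notin> S - {z} \<Longrightarrow> monomial_map \<mu> \<eta> x u = 0"
  unfolding monomial_map_def by auto

lemma monomial_map_in_Rcarrier: "monomial_map \<mu> \<eta> x \<in> Rcarrier z S"
  unfolding Rcarrier_def using monomial_map_outside by blast

context
  fixes \<mu> :: "'s \<Rightarrow> 'd \<Rightarrow> 'd" and \<eta> :: "'s \<Rightarrow> 'd"
  assumes \<mu>\<eta>: "group_elt z E S \<mu> \<eta>"
begin

lemma mu_lft_dr_aut: "s \<in> S \<Longrightarrow> dr_aut (\<mu> (lft s))"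
  using \<mu>\<eta> lft_in_E unfolding group_elt_def by blast

lemma eta_neq_zero: "s \<in> S - {z} \<Longrightarrow> \<eta> s \<noteq> 0"
  using \<mu>\<eta> unfolding group_elt_def by blast

lemma monomial_map_Rsingle:
  assumes s: "s \<in> S - {z}"
  shows "monomial_map \<mu> \<eta> (Rsingle s d) = Rsingle (\<phi> s) (\<mu> (lft s) d * \<eta> s)"
proof
  fix u
  show "monomial_map \<mu> \<eta> (Rsingle s d) u = Rsingle (\<phi> s) (\<mu> (lft s) d * \<eta> s) u"
  proof (cases "u \<in> S - {z}")
    case True
    then obtain s' where s': "s' \<in> S - {z}" and u: "u = \<phi> s'"
      by (rule phi_preimageE)
    have "monomial_map \<mu> \<eta> (Rsingle s d) u = \<mu> (lft s') (Rsingle s d s') * \<eta> s'"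
      unfolding u using s' by (rule monomial_map_phi)
    moreover have "\<mu> (lft s') 0 = 0"
      using s' mu_lft_dr_aut dr_aut_0 by blast
    moreover have "u = \<phi> s \<longleftrightarrow> s' = s"
      using u s s' phi_eq_iff by blast
    ultimately show ?thesis
      unfolding Rsingle_def by auto
  next
    case False
    moreover have "\<phi> s \<in> S - {z}"
      using s phi_in_S phi_eq_zero_iff by blast
    ultimately show ?thesis
      unfolding Rsingle_def using monomial_map_outside[OF False] by auto
  qed
qed

lemma monomial_map_Radd: "monomial_map \<mu> \<eta> (Radd x y) = Radd (monomial_map \<mu> \<eta> x) (monomial_map \<mu> \<eta> y)"
  unfolding monomial_map_def Radd_def
  using mu_lft_dr_aut psi_in_S by (auto simp: dr_autD(2) distrib_right)

lemma bij_betw_monomial_map: "bij_betw (monomial_map \<mu> \<eta>) (Rcarrier z S) (Rcarrier z S)"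
proof (rule bij_betw_byWitness)
  define inverse_map where "inverse_map y =
    (\<lambda>s. if s \<in> S - {z} then inv (\<mu> (lft s)) (y (\<phi> s) * inverse (\<eta> s)) else 0)"
    for y :: "'s \<Rightarrow> 'd"
  show "\<forall>x\<in>Rcarrier z S. inverse_map (monomial_map \<mu> \<eta> x) = x"
  proof (intro ballI ext)
    fix x :: "'s \<Rightarrow> 'd" and s
    assume x: "x \<in> Rcarrier z S"
    show "inverse_map (monomial_map \<mu> \<eta> x) s = x s"
    proof (cases "s \<in> S - {z}")
      case True
      then have "inverse_map (monomial_map \<mu> \<eta> x) s
          = inv (\<mu> (lft s)) (\<mu> (lft s) (x s) * (\<eta> s * inverse (\<eta> s)))"
        unfolding inverse_map_def by (simp add: monomial_map_phi mult.assoc)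
      then show ?thesis
        using True eta_neq_zero by (simp add: dr_aut_inv_f[OF mu_lft_dr_aut])
    next
      case False
      then show ?thesis
        using x unfolding inverse_map_def Rcarrier_def by auto
    qed
  qed
  show "\<forall>y\<in>Rcarrier z S. monomial_map \<mu> \<eta> (inverse_map y) = y"
  proof (intro ballI ext)
    fix y :: "'s \<Rightarrow> 'd" and u
    assume y: "y \<in> Rcarrier z S"
    show "monomial_map \<mu> \<eta> (inverse_map y) u = y u"
    proof (cases "u \<in> S - {z}")
      case True
      then obtain s where s: "s \<in> S - {z}" and u: "u = \<phi> s"
        by (rule phi_preimageE)
      have "monomial_map \<mu> \<eta> (inverse_map y) u
          = \<mu> (lft s) (inv (\<mu> (lft s)) (y u * inverse (\<eta> s))) * \<eta> s"
        unfolding u inverse_map_def using s by (simp add: monomial_map_phi)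
      also have "\<dots> = y u * (inverse (\<eta> s) * \<eta> s)"
        using s by (simp add: dr_aut_f_inv[OF mu_lft_dr_aut] mult.assoc)
      finally show ?thesis
        using s eta_neq_zero by simp
    next
      case False
      then show ?thesis
        using y monomial_map_outside[OF False] unfolding Rcarrier_def by auto
    qed
  qed
  show "monomial_map \<mu> \<eta> ` Rcarrier z S \<subseteq> Rcarrier z S"
    using monomial_map_in_Rcarrier by blast
  show "inverse_map ` Rcarrier z S \<subseteq> Rcarrier z S"
    unfolding inverse_map_def Rcarrier_def by auto
qed

lemma monomial_map_Rmult_phi:
  assumes hom: "monomial_hom \<mu> \<eta>" and v: "v \<in> S - {z}"
  shows "monomial_map \<mu> \<eta> (Rmult m z S \<alpha> \<xi> x y) (\<phi> v)
    = Rmult m z S \<alpha> \<xi> (monomial_map \<mu> \<eta> x) (monomial_map \<mu> \<eta> y) (\<phi> v)"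
proof -
  let ?x = "monomial_map \<mu> \<eta> x" and ?y = "monomial_map \<mu> \<eta> y"
  have "monomial_map \<mu> \<eta> (Rmult m z S \<alpha> \<xi> x y) (\<phi> v)
      = \<mu> (lft v) (\<Sum>(s, t)\<in>factorizations v. x s * \<alpha> s (y t) * \<xi> s t) * \<eta> v"
    unfolding Rmult_eq_sum[symmetric] using v by (rule monomial_map_phi)
  also have "\<dots> = (\<Sum>(s, t)\<in>factorizations v. \<mu> (lft v) (x s * \<alpha> s (y t) * \<xi> s t) * \<eta> v)"
    using v mu_lft_dr_aut by (simp add: dr_aut_sum sum_distrib_right case_prod_unfold)
  also have "\<dots> = (\<Sum>(s, t)\<in>factorizations v. ?x (\<phi> s) * \<alpha> (\<phi> s) (?y (\<phi> t)) * \<xi> (\<phi> s) (\<phi> t))"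
  proof (rule sum.cong[OF refl], clarify)
    fix s t
    assume "(s, t) \<in> factorizations v"
    then have s: "s \<in> S - {z}" and t: "t \<in> S - {z}" and st: "m s t = v" "m s t \<noteq> z"
      unfolding factorizations_def by auto
    then have "lft v = lft s"
      using lft_mult_eq by blast
    moreover have "\<mu> (lft s) (x s * \<alpha> s (y t) * \<xi> s t) * \<eta> (m s t)
        = \<mu> (lft s) (x s) * \<eta> s * \<alpha> (\<phi> s) (\<mu> (lft t) (y t) * \<eta> t) * \<xi> (\<phi> s) (\<phi> t)"
      using hom s t st(2) unfolding monomial_hom_def by blast
    ultimately show "\<mu> (lft v) (x s * \<alpha> s (y t) * \<xi> s t) * \<eta> v
        = ?x (\<phi> s) * \<alpha> (\<phi> s) (?y (\<phi> t)) * \<xi> (\<phi> s) (\<phi> t)"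
      using s t st(1) by (simp add: monomial_map_phi)
  qed
  also have "\<dots> = (\<Sum>(s, t)\<in>factorizations (\<phi> v). ?x s * \<alpha> s (?y t) * \<xi> s t)"
    using sum.reindex_bij_betw[OF bij_betw_factorizations, of v "\<lambda>(s, t). ?x s * \<alpha> s (?y t) * \<xi> s t"] v
    by (simp add: case_prod_unfold)
  also have "\<dots> = Rmult m z S \<alpha> \<xi> ?x ?y (\<phi> v)"
    unfolding Rmult_eq_sum ..
  finally show ?thesis .
qed

lemma monomial_map_Rmult:
  assumes hom: "monomial_hom \<mu> \<eta>"
  shows "monomial_map \<mu> \<eta> (Rmult m z S \<alpha> \<xi> x y)
    = Rmult m z S \<alpha> \<xi> (monomial_map \<mu> \<eta> x) (monomial_map \<mu> \<eta> y)"
proof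
  fix u
  show "monomial_map \<mu> \<eta> (Rmult m z S \<alpha> \<xi> x y) u
    = Rmult m z S \<alpha> \<xi> (monomial_map \<mu> \<eta> x) (monomial_map \<mu> \<eta> y) u"
  proof (cases "u \<in> S - {z}")
    case True
    then obtain v where "v \<in> S - {z}" and "u = \<phi> v"
      by (rule phi_preimageE)
    then show ?thesis
      using monomial_map_Rmult_phi[OF hom] by simp
  next
    case False
    then show ?thesis
      unfolding Rmult_eq_sum factorizations_outside[OF False] by (simp add: monomial_map_outside)
  qed
qed

lemma R_aut_monomial_map: "monomial_hom \<mu> \<eta> \<Longrightarrow> R_aut m z S \<alpha> \<xi> (monomial_map \<mu> \<eta>)"
  unfolding R_aut_def
  using bij_betw_monomial_map monomial_map_Radd monomial_map_Rmult by blast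

end


lemma eta_on_E_if_act_eq:
  assumes normal: "normal_cocycle E \<alpha> \<xi>" and \<mu>\<eta>: "group_elt z E S \<mu> \<eta>"
    and act: "act_eq m z E S \<mu> \<eta> \<alpha> \<xi> (\<lambda>s. \<alpha> (\<phi> s)) (\<lambda>s t. \<xi> (\<phi> s) (\<phi> t))"
    and e: "e \<in> E"
  shows "\<eta> e = 1"
proof -
  have eS: "e \<in> S - {z}" and ee: "m e e = e" and "m e e \<noteq> z"
    using e E_in_S E_neq_zero E_idem by auto
  have "\<phi> e \<in> E"
    using e phi_E_image by blast
  moreover have "dr_aut (\<mu> e)"
    using \<mu>\<eta> e unfolding group_elt_def by blast
  ultimately have "\<mu> e (\<xi> (\<phi> e) (\<phi> e)) = 1"
    using normal unfolding normal_cocycle_def by (simp add: dr_aut_1)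
  moreover have "\<mu> e (\<xi> (\<phi> e) (\<phi> e)) = \<eta> e * \<alpha> e (\<eta> e) * \<xi> e e * inverse (\<eta> (m e e))"
    using act eS e ee \<open>m e e \<noteq> z\<close> unfolding act_eq_def by blast
  moreover have "\<eta> e \<noteq> 0"
    using \<mu>\<eta> eS unfolding group_elt_def by blast
  ultimately show ?thesis
    using normal e ee unfolding normal_cocycle_def by (simp add: mult.assoc)
qed

lemma mem_cstab_if_R_aut0:
  assumes \<gamma>: "R_aut0 m z E S \<alpha> \<xi> \<gamma>" and \<mu>\<eta>: "group_elt z E S \<mu> \<eta>"
    and single: "\<And>d s e. s \<in> S - {z} \<Longrightarrow> e \<in> E \<Longrightarrow> m e s = s \<Longrightarrow>
      \<gamma> (Rsingle s d) = Rsingle (\<phi> s) (\<mu> e d * \<eta> s)"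
  shows "\<phi> \<in> cstab m z E S \<alpha> \<xi>"
proof -
  have "monomial_hom \<mu> \<eta>"
  proof (rule monomial_hom_if_R_aut)
    show "R_aut m z S \<alpha> \<xi> \<gamma>"
      using \<gamma> unfolding R_aut0_def by blast
    show "\<gamma> (Rsingle s d) = Rsingle (\<phi> s) (\<mu> (lft s) d * \<eta> s)" if "s \<in> S - {z}" for s d
      using single that lft_in_E lft_mult by blast
  qed
  then show ?thesis
    unfolding cstab_def
    using aut group_elt_dual[OF \<mu>\<eta>] act_eq_dual_iff_monomial_hom[OF \<mu>\<eta>] by blast
qed

lemma monomial_map_E_image:
  assumes \<mu>\<eta>: "group_elt z E S \<mu> \<eta>" and units: "\<And>e. e \<in> E \<Longrightarrow> \<eta> e = 1"
  shows "monomial_map \<mu> \<eta> ` (\<lambda>e. Rsingle e 1) ` E = (\<lambda>e. Rsingle e 1) ` E"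
proof -
  have "monomial_map \<mu> \<eta> (Rsingle e 1) = Rsingle (\<phi> e) 1" if "e \<in> E" for e
  proof -
    have "dr_aut (\<mu> e)"
      using \<mu>\<eta> that unfolding group_elt_def by blast
    then show ?thesis
      using that E_in_S E_neq_zero
      by (simp add: monomial_map_Rsingle[OF \<mu>\<eta>] lft_E units dr_aut_1)
  qed
  then have "monomial_map \<mu> \<eta> ` (\<lambda>e. Rsingle e 1) ` E = (\<lambda>e. Rsingle e 1) ` \<phi> ` E"
    by (force simp: image_image)
  then show ?thesis
    unfolding phi_E_image .
qed

lemma mem_ImPhi_if_act_eq:
  assumes normal: "normal_cocycle E \<alpha> \<xi>" and \<mu>\<eta>: "group_elt z E S \<mu> \<eta>"
    and act: "act_eq m z E S \<mu> \<eta> \<alpha> \<xi> (\<lambda>s. \<alpha> (\<phi> s)) (\<lambda>s t. \<xi> (\<phi> s) (\<phi> t))"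
  shows "\<phi> \<in> ImPhi m z E S \<alpha> \<xi>"
proof -
  define \<nu> where "\<nu> e = inv (\<mu> e)" for e
  define \<theta> where "\<theta> = dual_eta \<mu> \<eta>"
  have \<nu>\<theta>: "group_elt z E S \<nu> \<theta>"
    unfolding \<nu>_def \<theta>_def using group_elt_dual[OF \<mu>\<eta>] by simp
  have "act_eq m z E S (\<lambda>e. inv (\<nu> e)) (dual_eta \<nu> \<theta>) \<alpha> \<xi> (\<lambda>s. \<alpha> (\<phi> s)) (\<lambda>s t. \<xi> (\<phi> s) (\<phi> t))"
  proof (subst act_eq_cong)
    show "inv (\<nu> e) = \<mu> e" if "e \<in> E" for e
      using \<mu>\<eta> that unfolding \<nu>_def group_elt_def by (simp add: inv_inv_eq dr_autD(1))
    show "dual_eta \<nu> \<theta> s = \<eta> s" if "s \<in> S - {z}" for s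
      using dual_eta_dual[OF \<mu>\<eta>] that unfolding \<nu>_def \<theta>_def by simp
  qed (rule act)
  then have hom: "monomial_hom \<nu> \<theta>"
    using act_eq_dual_iff_monomial_hom[OF \<nu>\<theta>] by blast
  have "\<theta> e = 1" if "e \<in> E" for e
  proof -
    have "dr_aut (\<mu> e)"
      using \<mu>\<eta> that unfolding group_elt_def by blast
    then show ?thesis
      using that eta_on_E_if_act_eq[OF normal \<mu>\<eta> act]
      unfolding \<theta>_def dual_eta_def by (simp add: lft_E dr_aut_1[OF dr_aut_inv])
  qed
  then have "R_aut0 m z E S \<alpha> \<xi> (monomial_map \<nu> \<theta>)"
    unfolding R_aut0_def using R_aut_monomial_map[OF \<nu>\<theta> hom] monomial_map_E_image[OF \<nu>\<theta>] by blast
  moreover have "monomial_map \<nu> \<theta> (Rsingle s d) = Rsingle (\<phi> s) (\<nu> e d * \<theta> s)"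
    if "s \<in> S - {z}" "e \<in> E" "m e s = s" for s e d
    using that monomial_map_Rsingle[OF \<nu>\<theta>] lft_unique by auto
  ultimately show ?thesis
    unfolding ImPhi_def using aut \<nu>\<theta> by blast
qed

end

context crossed_ring
begin

lemma ImPhi_subset_cstab: "ImPhi m z E S \<alpha> \<xi> \<subseteq> cstab m z E S \<alpha> \<xi>"
proof
  fix \<phi>
  assume "\<phi> \<in> ImPhi m z E S \<alpha> \<xi>"
  then obtain \<gamma> \<mu> \<eta> where aut: "sg_aut m S \<phi>" and \<gamma>: "R_aut0 m z E S \<alpha> \<xi> \<gamma>"
    and \<mu>\<eta>: "group_elt z E S \<mu> \<eta>"
    and single: "\<And>d s e. s \<in> S - {z} \<Longrightarrow> e \<in> E \<Longrightarrow> m e s = s \<Longrightarrow>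
      \<gamma> (Rsingle s d) = Rsingle (\<phi> s) (\<mu> e d * \<eta> s)"
    unfolding ImPhi_def by blast
  interpret crossed_ring_aut m z E S \<alpha> \<xi> \<phi>
    using aut by unfold_locales
  show "\<phi> \<in> cstab m z E S \<alpha> \<xi>"
    using \<gamma> \<mu>\<eta> single by (rule mem_cstab_if_R_aut0)
qed

lemma cstab_subset_ImPhi:
  assumes "normal_cocycle E \<alpha> \<xi>"
  shows "cstab m z E S \<alpha> \<xi> \<subseteq> ImPhi m z E S \<alpha> \<xi>"
proof
  fix \<phi>
  assume "\<phi> \<in> cstab m z E S \<alpha> \<xi>"
  then obtain \<mu> \<eta> where aut: "sg_aut m S \<phi>" and \<mu>\<eta>: "group_elt z E S \<mu> \<eta>"
    and act: "act_eq m z E S \<mu> \<eta> \<alpha> \<xi> (\<lambda>s. \<alpha> (\<phi> s)) (\<lambda>s t. \<xi> (\<phi> s) (\<phi> t))"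
    unfolding cstab_def by blast
  interpret crossed_ring_aut m z E S \<alpha> \<xi> \<phi>
    using aut by unfold_locales
  show "\<phi> \<in> ImPhi m z E S \<alpha> \<xi>"
    using assms \<mu>\<eta> act by (rule mem_ImPhi_if_act_eq)
qed

end

theorem mainTheorem6:
  fixes m :: "'s \<Rightarrow> 's \<Rightarrow> 's" and z :: 's and E S :: "'s set"
    and \<alpha> :: "'s \<Rightarrow> 'd::division_ring \<Rightarrow> 'd" and \<xi> :: "'s \<Rightarrow> 's \<Rightarrow> 'd"
  assumes "sq_free_sg m z E S"
    and "cocycle m z S \<alpha> \<xi>"
    and "normal_cocycle E \<alpha> \<xi>"
  shows "ImPhi m z E S \<alpha> \<xi> = cstab m z E S \<alpha> \<xi>"
proof -
  interpret crossed_ring m z E S \<alpha> \<xi>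
    using assms(1,2) by (intro crossed_ring.intro square_free.intro crossed_ring_axioms.intro)
  show ?thesis
    using ImPhi_subset_cstab cstab_subset_ImPhi[OF assms(3)] by blast
qed

end
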